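(* Let $\alpha\ge0$, $0\le\beta<1$, and let $f=h+\overline{g}\in\mathcal{W}_{\mathcal{H}}^0(\alpha,\beta)$ with $h(z)=z+\sum_{n\ge2}a_nz^n$, $g(z)=\sum_{n\ge2}b_nz^n$. Then for every $n\ge2$: (i) $|a_n|+|b_n|\le\dfrac{2(1-\beta)}{n(1+\alpha(n-1))}$; (ii) $\big||a_n|-|b_n|\big|\le\dfrac{2(1-\beta)}{n(1+\alpha(n-1))}$; (iii) $|a_n|\le\dfrac{2(1-\beta)}{n(1+\alpha(n-1))}$.
   Context: Let $\mathbb{D}=\{z\in\mathbb{C}:|z|<1\}$. $\mathcal{H}^0$ denotes the class of harmonic maps $f=h+\overline{g}$ on $\mathbb{D}$, with $h,g$ analytic in $\mathbb{D}$, $h(z)=z+\sum_{n\ge2}a_nz^n$ and $g(z)=\sum_{n\ge2}b_nz^n$. For $\alpha\ge0$, $0\le\beta<1$, $\mathcal{W}_{\mathcal{H}}^0(\alpha,\beta)$ denotes the class of $f=h+\overline{g}\in\mathcal{H}^0$ such that $\Re\big(h'(z)+\alpha zh''(z)-\beta\big)>|g'(z)+\alpha zg''(z)|$ for all $z\in\mathbb{D}$. *)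

theory Defs
  imports "HOL-Complex_Analysis.Complex_Analysis"
begin

text \<open>The class H^0: harmonic maps f = h + conj g on the unit disk with
  h(z) = z + sum_{n>=2} a_n z^n and g(z) = sum_{n>=2} b_n z^n (power series
  converging on the disk). We represent f by its analytic parts h and g.\<close>

definition H0 :: "(complex \<Rightarrow> complex) \<Rightarrow> (complex \<Rightarrow> complex) \<Rightarrow> bool" where
  "H0 h g \<longleftrightarrow> h holomorphic_on ball 0 1 \<and> g holomorphic_on ball 0 1 \<and>
     h 0 = 0 \<and> deriv h 0 = 1 \<and> g 0 = 0 \<and> deriv g 0 = 0"

definition WH0 :: "real \<Rightarrow> real \<Rightarrow> (complex \<Rightarrow> complex) \<Rightarrow> (complex \<Rightarrow> complex) \<Rightarrow> bool" where
  "WH0 \<alpha> \<beta> h g \<longleftrightarrow> H0 h g \<and>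
     (\<forall>z \<in> ball 0 1.
        Re (deriv h z + of_real \<alpha> * z * deriv (deriv h) z - of_real \<beta>)
          > cmod (deriv g z + of_real \<alpha> * z * deriv (deriv g) z))"

end

theory Submission
  imports Defs
begin

text \<open>For every unimodular \<open>\<epsilon>\<close> the function \<open>F = (h' + \<alpha> z h'') + \<epsilon> (g' + \<alpha> z g'')\<close> is
  holomorphic on the disk with \<open>F(0) = 1\<close>, and the defining inequality of the class gives
  \<open>Re F > \<beta>\<close>. Its Taylor coefficient of order \<open>n - 1\<close> is \<open>n (1 + \<alpha> (n - 1)) (a\<^sub>n + \<epsilon> b\<^sub>n)\<close>, so
  Caratheodory's bound \<open>|c\<^sub>k| \<le> 2 (Re F(0) - \<beta>)\<close> bounds \<open>|a\<^sub>n + \<epsilon> b\<^sub>n|\<close>; choosing \<open>\<epsilon>\<close> with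
  \<open>\<epsilon> b\<^sub>n\<close> parallel to \<open>a\<^sub>n\<close> gives (i), from which (ii) and (iii) follow.
  Caratheodory's bound comes from integrating the positive function \<open>Re F - \<beta>\<close> against
  \<open>e\<^sup>-\<^sup>i\<^sup>k\<^sup>\<theta>\<close> over circles of radius \<open>r < 1\<close> and letting \<open>r \<rightarrow> 1\<close>.\<close>

lemma circlepath_0_eq_cis: "circlepath 0 r t = of_real r * cis (2 * pi * t)"
  by (simp add: circlepath cis_conv_exp mult_ac)

lemma has_integral_circlepath_0:
  assumes "(f has_contour_integral I) (circlepath 0 r)"
  shows "((\<lambda>t. f (of_real r * cis (2 * pi * t)) * (2 * pi * \<i> * of_real r * cis (2 * pi * t)))
           has_integral I) {0..1}"
proof -
  have "((\<lambda>t. f (circlepath 0 r t) * vector_derivative (circlepath 0 r) (at t within {0..1}))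
          has_integral I) {0..1}"
    using assms by (simp add: has_contour_integral_def)
  then show ?thesis
  proof (rule has_integral_eq[rotated])
    fix t :: real assume "t \<in> {0..1}"
    then have "vector_derivative (circlepath 0 r) (at t within {0..1})
                 = 2 * pi * \<i> * r * exp (2 * of_real pi * \<i> * t)"
      by (intro vector_derivative_circlepath01) auto
    then show "f (circlepath 0 r t) * vector_derivative (circlepath 0 r) (at t within {0..1})
        = f (of_real r * cis (2 * pi * t)) * (2 * pi * \<i> * of_real r * cis (2 * pi * t))"
      by (simp add: circlepath_0_eq_cis cis_conv_exp mult_ac)
  qed
qed

lemma has_integral_Taylor_coeff_circle:
  assumes F: "F holomorphic_on ball 0 R" and r: "0 < r" "r < R"
  shows "((\<lambda>t. F (of_real r * cis (2 * pi * t)) * cnj (cis (2 * pi * t)) ^ k)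
           has_integral of_real r ^ k * ((deriv ^^ k) F 0 / fact k)) {0..1}"
proof -
  have "((\<lambda>u. F u / (u - 0) ^ Suc k) has_contour_integral (2 * pi * \<i>) / fact k * (deriv ^^ k) F 0)
          (circlepath 0 r)"
    using r by (intro Cauchy_has_contour_integral_higher_derivative_circlepath)
      (auto intro!: holomorphic_on_imp_continuous_on holomorphic_on_subset[OF F])
  from has_integral_mult_right[OF has_integral_circlepath_0[OF this], of "of_real r ^ k / (2 * pi * \<i>)"]
  show ?thesis
    using r by (simp add: cis_cnj power_inverse field_simps flip: cis_inverse)
qed

lemma has_integral_power_circle_eq_0:
  assumes F: "F holomorphic_on ball 0 R" and r: "0 < r" "r < R" and k: "k \<ge> 1"
  shows "((\<lambda>t. F (of_real r * cis (2 * pi * t)) * cis (2 * pi * t) ^ k) has_integral 0) {0..1}"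
proof -
  obtain j where j: "k = Suc j" using k by (metis Suc_le_D One_nat_def)
  have "((\<lambda>u. F u * u ^ j) has_contour_integral 0) (circlepath 0 r)"
    using r by (intro Cauchy_theorem_convex_simple[where S = "ball 0 R"])
      (auto intro!: holomorphic_intros F simp: path_image_circlepath_nonneg)
  from has_integral_mult_right[OF has_integral_circlepath_0[OF this], of "inverse (2 * pi * \<i> * of_real r ^ k)"]
  show ?thesis
    using r by (simp add: j power_mult_distrib field_simps)
qed

lemma has_integral_Re_times_circle:
  assumes F: "F holomorphic_on ball 0 R" and r: "0 < r" "r < R" and k: "k \<ge> 1"
  shows "((\<lambda>t. of_real (Re (F (of_real r * cis (2 * pi * t))) - \<beta>) * cnj (cis (2 * pi * t)) ^ k)
           has_integral of_real r ^ k * ((deriv ^^ k) F 0 / fact k) / 2) {0..1}"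
proof -
  define \<phi> where "\<phi> t = F (of_real r * cis (2 * pi * t))" for t
  define w where "w t = cnj (cis (2 * pi * t)) ^ k" for t
  have coeff: "((\<lambda>t. \<phi> t * w t) has_integral of_real r ^ k * ((deriv ^^ k) F 0 / fact k)) {0..1}"
    unfolding \<phi>_def w_def by (rule has_integral_Taylor_coeff_circle[OF F r])
  have "((\<lambda>t. cnj (\<phi> t * cis (2 * pi * t) ^ k)) has_integral cnj 0) {0..1}"
    unfolding \<phi>_def using has_integral_power_circle_eq_0[OF F r k]
    by (rule has_integral_cnj[unfolded o_def, THEN iffD2])
  then have conj: "((\<lambda>t. cnj (\<phi> t) * w t) has_integral 0) {0..1}"
    by (simp add: w_def)
  have "((\<lambda>t. cnj (cis (2 * pi * t) ^ k)) has_integral cnj 0) {0..1}"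
    using has_integral_power_circle_eq_0[of "\<lambda>_. 1", OF _ r k]
    by (intro has_integral_cnj[unfolded o_def, THEN iffD2]) auto
  then have const: "(w has_integral 0) {0..1}"
    by (simp add: w_def[abs_def])
  \<comment> \<open>\<open>Re \<phi> - \<beta> = (\<phi> + cnj \<phi>)/2 - \<beta>\<close>, and for \<open>k \<ge> 1\<close> only \<open>\<phi>\<close> has a nonzero moment against \<open>w\<close>.\<close>
  have "((\<lambda>t. (\<phi> t * w t + cnj (\<phi> t) * w t) / 2 - of_real \<beta> * w t)
          has_integral (of_real r ^ k * ((deriv ^^ k) F 0 / fact k) + 0) / 2 - of_real \<beta> * 0) {0..1}"
    by (intro has_integral_diff has_integral_divide has_integral_add has_integral_mult_right coeff conj const)
  moreover have "(\<phi> t * w t + cnj (\<phi> t) * w t) / 2 - of_real \<beta> * w t = of_real (Re (\<phi> t) - \<beta>) * w t" for t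
  proof -
    have "\<phi> t * w t + cnj (\<phi> t) * w t = (\<phi> t + cnj (\<phi> t)) * w t"
      by (simp add: distrib_right)
    then show ?thesis
      by (simp add: complex_add_cnj field_simps)
  qed
  ultimately show ?thesis
    by (simp add: \<phi>_def w_def)
qed

lemma Taylor_coeff_bound_circle:
  assumes F: "F holomorphic_on ball 0 R" and Re_gt: "\<And>z. z \<in> ball 0 R \<Longrightarrow> Re (F z) > \<beta>"
    and r: "0 < r" "r < R" and k: "k \<ge> 1"
  shows "r ^ k * norm ((deriv ^^ k) F 0 / fact k) \<le> 2 * (Re (F 0) - \<beta>)"
proof -
  define \<phi> where "\<phi> t = F (of_real r * cis (2 * pi * t))" for t
  have on_disk: "of_real r * cis (2 * pi * t) \<in> ball 0 R" for t
    using r by (simp add: norm_mult)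
  have "((\<lambda>t. Re (\<phi> t)) has_integral Re (F 0)) {0..1}"
    using has_integral_Taylor_coeff_circle[OF F r, of 0]
    by (intro has_integral_Re[where f = \<phi>, simplified]) (simp add: \<phi>_def[abs_def])
  then have mean: "((\<lambda>t. Re (\<phi> t) - \<beta>) has_integral Re (F 0) - \<beta>) {0..1}"
    using has_integral_diff[OF _ has_integral_const_real[of \<beta> 0 1]] by simp
  have "norm (of_real r ^ k * ((deriv ^^ k) F 0 / fact k) / 2) \<le> (Re (F 0) - \<beta>) \<bullet> 1"
  proof (rule has_integral_norm_bound_integral_component[OF _ mean])
    show "((\<lambda>t. of_real (Re (\<phi> t) - \<beta>) * cnj (cis (2 * pi * t)) ^ k)
            has_integral of_real r ^ k * ((deriv ^^ k) F 0 / fact k) / 2) {0..1}"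
      unfolding \<phi>_def by (rule has_integral_Re_times_circle[OF F r k])
  next
    fix t :: real
    have "\<beta> < Re (\<phi> t)" unfolding \<phi>_def by (rule Re_gt[OF on_disk])
    then show "norm (of_real (Re (\<phi> t) - \<beta>) * cnj (cis (2 * pi * t)) ^ k) \<le> (Re (\<phi> t) - \<beta>) \<bullet> 1"
      by (simp add: norm_mult norm_power del: of_real_diff)
  qed
  moreover have "norm (of_real r ^ k * ((deriv ^^ k) F 0 / fact k) / 2)
      = r ^ k * norm ((deriv ^^ k) F 0 / fact k) / 2"
    using r by (simp only: norm_divide norm_mult norm_power norm_of_real abs_of_pos) simp
  ultimately show ?thesis
    by simp
qed

lemma Caratheodory_Taylor_coeff_bound:
  assumes F: "F holomorphic_on ball 0 R" and Re_gt: "\<And>z. z \<in> ball 0 R \<Longrightarrow> Re (F z) > \<beta>"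
    and R: "R > 0" and k: "k \<ge> 1"
  shows "R ^ k * norm ((deriv ^^ k) F 0 / fact k) \<le> 2 * (Re (F 0) - \<beta>)"
proof (rule tendsto_upperbound)
  show "((\<lambda>r. r ^ k * norm ((deriv ^^ k) F 0 / fact k)) \<longlongrightarrow> R ^ k * norm ((deriv ^^ k) F 0 / fact k))
          (at_left R)"
    by (intro tendsto_intros)
  have "eventually (\<lambda>r. 0 < r \<and> r < R) (at_left R)"
    using R by (intro eventually_at_leftI[of 0]) auto
  then show "eventually (\<lambda>r. r ^ k * norm ((deriv ^^ k) F 0 / fact k) \<le> 2 * (Re (F 0) - \<beta>)) (at_left R)"
    by eventually_elim (intro Taylor_coeff_bound_circle[OF F Re_gt _ _ k], auto)
qed (simp add: trivial_limit_at_left_real)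

lemma has_fps_expansion_of_sums:
  fixes a :: "nat \<Rightarrow> complex"
  assumes R: "R > 0" and sums: "\<And>z. z \<in> ball 0 R \<Longrightarrow> (\<lambda>n. a n * z ^ n) sums f z"
  shows "f has_fps_expansion Abs_fps a"
proof -
  have "summable (\<lambda>n. a n * of_real (R / 2) ^ n)"
    using R by (intro sums_summable[OF sums]) auto
  then have "conv_radius a \<ge> norm (of_real (R / 2) :: complex)"
    by (rule conv_radius_geI)
  then have "fps_conv_radius (Abs_fps a) > 0"
    using R by (simp add: fps_conv_radius_def) (meson ereal_less(2) half_gt_zero_iff order_less_le_trans)
  moreover have "eventually (\<lambda>z. z \<in> ball 0 R) (nhds (0::complex))"
    using R by (intro eventually_nhds_in_open) auto
  then have "eventually (\<lambda>z. eval_fps (Abs_fps a) z = f z) (nhds 0)"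
    by eventually_elim (simp add: eval_fps_def sums_unique[OF sums])
  ultimately show ?thesis
    by (simp add: has_fps_expansion_def)
qed

lemma fps_nth_deriv_plus_X_times_deriv2:
  fixes A :: "'a::comm_ring_1 fps"
  shows "(fps_deriv A + fps_const c * fps_X * fps_deriv (fps_deriv A)) $ k
           = of_nat (Suc k) * (1 + c * of_nat k) * A $ Suc k"
  by (cases k) (simp_all add: algebra_simps)

lemma unimodular_rotation_norm_add:
  fixes A B :: complex
  obtains \<epsilon> where "norm \<epsilon> = 1" "norm (A + \<epsilon> * B) = norm A + norm B"
proof -
  define u where "u = (if A = 0 then 1 else sgn A)"
  define \<epsilon> where "\<epsilon> = (if B = 0 then 1 else u / sgn B)"
  have u: "norm u = 1" by (simp add: u_def norm_sgn)
  have "A = of_real (norm A) * u" by (simp add: u_def sgn_eq)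
  moreover have "\<epsilon> * B = of_real (norm B) * u" by (simp add: \<epsilon>_def sgn_eq)
  ultimately have "A + \<epsilon> * B = of_real (norm A + norm B) * u"
    by (simp add: distrib_right)
  then have "norm (A + \<epsilon> * B) = norm A + norm B"
    by (simp add: norm_mult u del: of_real_add)
  moreover have "norm \<epsilon> = 1" by (simp add: \<epsilon>_def u norm_divide norm_sgn)
  ultimately show ?thesis by (intro that)
qed

lemma WH0_rotated_coeff_bound:
  fixes a b :: "nat \<Rightarrow> complex"
  assumes \<alpha>: "\<alpha> \<ge> 0" and W: "WH0 \<alpha> \<beta> h g"
    and h_sums: "\<And>z. z \<in> ball 0 1 \<Longrightarrow> (\<lambda>n. a n * z ^ n) sums h z"
    and g_sums: "\<And>z. z \<in> ball 0 1 \<Longrightarrow> (\<lambda>n. b n * z ^ n) sums g z"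
    and \<epsilon>: "norm \<epsilon> = 1" and n: "n \<ge> 2"
  shows "real n * (1 + \<alpha> * (real n - 1)) * norm (a n + \<epsilon> * b n) \<le> 2 * (1 - \<beta>)"
proof -
  obtain k where k: "n = Suc k" "k \<ge> 1" using n by (cases n) auto
  define D where "D \<phi> z = deriv \<phi> z + of_real \<alpha> * z * deriv (deriv \<phi>) z" for \<phi> :: "complex \<Rightarrow> complex" and z
  define F where "F z = D h z + \<epsilon> * D g z" for z
  have hol: "h holomorphic_on ball 0 1" "g holomorphic_on ball 0 1"
    and F0: "F 0 = 1"
    and cond: "\<And>z. z \<in> ball 0 1 \<Longrightarrow> Re (D h z) - \<beta> > norm (D g z)"
    using W by (auto simp: WH0_def H0_def F_def D_def)
  have "F holomorphic_on ball 0 1"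
    using hol unfolding F_def D_def by (intro holomorphic_intros holomorphic_deriv) auto
  moreover have "Re (F z) > \<beta>" if "z \<in> ball 0 1" for z
  proof -
    have "- norm (D g z) \<le> Re (\<epsilon> * D g z)"
      using abs_Re_le_cmod[of "\<epsilon> * D g z"] by (simp add: norm_mult \<epsilon>)
    then show ?thesis using cond[OF that] by (simp add: F_def)
  qed
  ultimately have bound: "norm ((deriv ^^ k) F 0 / fact k) \<le> 2 * (1 - \<beta>)"
    using Caratheodory_Taylor_coeff_bound[of F 1 \<beta> k] k F0 by simp
  have "F has_fps_expansion
          (fps_deriv (Abs_fps a) + fps_const (of_real \<alpha>) * fps_X * fps_deriv (fps_deriv (Abs_fps a)))
          + fps_const \<epsilon> * (fps_deriv (Abs_fps b) + fps_const (of_real \<alpha>) * fps_X * fps_deriv (fps_deriv (Abs_fps b)))"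
    unfolding F_def D_def
    by (intro fps_expansion_intros has_fps_expansion_of_sums[OF _ h_sums] has_fps_expansion_of_sums[OF _ g_sums]) auto
  from fps_nth_fps_expansion[OF this, of k, symmetric]
  have "(deriv ^^ k) F 0 / fact k = of_nat (Suc k) * (1 + of_real \<alpha> * of_nat k) * (a (Suc k) + \<epsilon> * b (Suc k))"
    by (simp only: fps_add_nth fps_mult_left_const_nth fps_nth_deriv_plus_X_times_deriv2 fps_nth_Abs_fps)
      (simp add: ring_distribs mult_ac)
  also have "\<dots> = of_real (real n * (1 + \<alpha> * (real n - 1))) * (a n + \<epsilon> * b n)"
    by (simp add: k)
  finally have "(deriv ^^ k) F 0 / fact k = of_real (real n * (1 + \<alpha> * (real n - 1))) * (a n + \<epsilon> * b n)" .
  moreover have "real n * (1 + \<alpha> * (real n - 1)) \<ge> 0"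
    using k \<alpha> by simp
  ultimately show ?thesis
    using bound by (simp only: norm_mult norm_of_real abs_of_nonneg)
qed

theorem theorem3p2:
  fixes \<alpha> \<beta> :: real and h g :: "complex \<Rightarrow> complex" and a b :: "nat \<Rightarrow> complex"
  assumes "\<alpha> \<ge> 0" and "0 \<le> \<beta>" and "\<beta> < 1"
    and "WH0 \<alpha> \<beta> h g"
    and "\<And>z. z \<in> ball 0 1 \<Longrightarrow> (\<lambda>n. a n * z ^ n) sums h z"
    and "\<And>z. z \<in> ball 0 1 \<Longrightarrow> (\<lambda>n. b n * z ^ n) sums g z"
    and "a 0 = 0" and "a 1 = 1" and "b 0 = 0" and "b 1 = 0"
  shows "\<forall>n\<ge>2.
      cmod (a n) + cmod (b n) \<le> 2 * (1 - \<beta>) / (real n * (1 + \<alpha> * (real n - 1))) \<and>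
      \<bar>cmod (a n) - cmod (b n)\<bar> \<le> 2 * (1 - \<beta>) / (real n * (1 + \<alpha> * (real n - 1))) \<and>
      cmod (a n) \<le> 2 * (1 - \<beta>) / (real n * (1 + \<alpha> * (real n - 1)))"
proof (intro allI impI)
  fix n :: nat assume n: "n \<ge> 2"
  obtain \<epsilon> where \<epsilon>: "norm \<epsilon> = 1" and aligned: "norm (a n + \<epsilon> * b n) = norm (a n) + norm (b n)"
    by (rule unimodular_rotation_norm_add)
  have "real n * (1 + \<alpha> * (real n - 1)) * (norm (a n) + norm (b n)) \<le> 2 * (1 - \<beta>)"
    using WH0_rotated_coeff_bound[OF assms(1,4-6) \<epsilon> n] by (simp only: aligned)
  moreover have "real n * (1 + \<alpha> * (real n - 1)) > 0"
    using n \<open>\<alpha> \<ge> 0\<close> by (simp add: add_pos_nonneg)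
  ultimately have "norm (a n) + norm (b n) \<le> 2 * (1 - \<beta>) / (real n * (1 + \<alpha> * (real n - 1)))"
    by (simp add: pos_le_divide_eq mult.commute)
  then show "cmod (a n) + cmod (b n) \<le> 2 * (1 - \<beta>) / (real n * (1 + \<alpha> * (real n - 1))) \<and>
      \<bar>cmod (a n) - cmod (b n)\<bar> \<le> 2 * (1 - \<beta>) / (real n * (1 + \<alpha> * (real n - 1))) \<and>
      cmod (a n) \<le> 2 * (1 - \<beta>) / (real n * (1 + \<alpha> * (real n - 1)))"
    using norm_ge_zero[of "a n"] norm_ge_zero[of "b n"] by linarith
qed

end
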